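(* Let $d$ be a premetric on a topological space $X$, and put $p=\overline d$ and $\rho=\overline d^\circ$. Then for every non-empty $A\subset X$ we have $\overline p_A=\overline d_A$ and $\overline\rho^\circ_A=\overline d^\circ_A$.
   Context: A premetric on $X$ is $d:X\times X\to[0,\infty)$ with $d(x,x)=0$. $B_d(x,\varepsilon)=\{y:d(x,y)<\varepsilon\}$, $B_d(A,\varepsilon)=\bigcup_{a\in A}B_d(a,\varepsilon)$. For non-empty $A$: $\overline d_A(x)=\inf\{\varepsilon>0:x\in\overline{B_d(A,\varepsilon)}\}$ and $\overline d^\circ_A(x)=\inf\{\varepsilon>0:x\in B_d(A,\varepsilon)\cup\mathrm{int}\,\overline{B_d(A,\varepsilon)}\}$ (same definitions for any premetric in place of $d$). The regularization is $\overline d(x,y)=\overline d_{\{x\}}(y)$, the semiregularization $\overline d^\circ(x,y)=\overline d^\circ_{\{x\}}(y)$. *)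

theory Defs
  imports "HOL-Analysis.Analysis"
begin

definition premetric :: "('a \<Rightarrow> 'a \<Rightarrow> real) \<Rightarrow> bool" where
  "premetric d \<longleftrightarrow> (\<forall>x y. 0 \<le> d x y) \<and> (\<forall>x. d x x = 0)"

definition pball :: "('a \<Rightarrow> 'a \<Rightarrow> real) \<Rightarrow> 'a \<Rightarrow> real \<Rightarrow> 'a set" where
  "pball d x e = {y. d x y < e}"

definition psetball :: "('a \<Rightarrow> 'a \<Rightarrow> real) \<Rightarrow> 'a set \<Rightarrow> real \<Rightarrow> 'a set" where
  "psetball d A e = (\<Union>a\<in>A. pball d a e)"

definition dbar :: "('a::topological_space \<Rightarrow> 'a \<Rightarrow> real) \<Rightarrow> 'a set \<Rightarrow> 'a \<Rightarrow> real" where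
  "dbar d A x = Inf {e. e > 0 \<and> x \<in> closure (psetball d A e)}"

definition dbar_int :: "('a::topological_space \<Rightarrow> 'a \<Rightarrow> real) \<Rightarrow> 'a set \<Rightarrow> 'a \<Rightarrow> real" where
  "dbar_int d A x = Inf {e. e > 0 \<and> x \<in> psetball d A e \<union> interior (closure (psetball d A e))}"

definition regularization :: "('a::topological_space \<Rightarrow> 'a \<Rightarrow> real) \<Rightarrow> 'a \<Rightarrow> 'a \<Rightarrow> real" where
  "regularization d x y = dbar d {x} y"

definition semiregularization :: "('a::topological_space \<Rightarrow> 'a \<Rightarrow> real) \<Rightarrow> 'a \<Rightarrow> 'a \<Rightarrow> real" where
  "semiregularization d x y = dbar_int d {x} y"

end

theory Submission
  imports Defs
begin

text \<open>Since \<open>p \<le> d\<close> and \<open>\<rho> \<le> d\<close>, every ball \<open>B\<^sub>d(A,\<epsilon>)\<close> lies in \<open>B\<^sub>p(A,\<epsilon>)\<close> and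
  \<open>B\<^sub>\<rho>(A,\<epsilon>)\<close>. Conversely \<open>p(a,x) < \<epsilon>\<close> puts \<open>x\<close> in the closure of a smaller \<open>d\<close>-ball around \<open>a\<close>,
  and \<open>\<rho>(a,x) < \<epsilon>\<close> puts \<open>x\<close> in \<open>B\<^sub>d \<union> int cl B\<^sub>d\<close> of a smaller radius. Hence for every \<open>\<epsilon>\<close> the
  balls of \<open>p\<close> and \<open>d\<close> have the same closure, and \<open>B \<union> int cl B\<close> is the same set for \<open>\<rho>\<close> and
  \<open>d\<close>; these are exactly the sets from which the two distance functions are computed.\<close>

lemma psetball_mono: "e' \<le> e \<Longrightarrow> psetball d A e' \<subseteq> psetball d A e"
  unfolding psetball_def pball_def by auto

lemma psetball_singleton_subset: "a \<in> A \<Longrightarrow> psetball d {a} e \<subseteq> psetball d A e"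
  unfolding psetball_def by auto

lemma mem_psetball_iff: "x \<in> psetball d A e \<longleftrightarrow> (\<exists>a\<in>A. d a x < e)"
  unfolding psetball_def pball_def by auto

lemma cInf_pos_le:
  fixes S :: "real set"
  assumes "\<forall>e\<in>S. e > 0" and "c \<ge> 0" and "\<And>e. c < e \<Longrightarrow> e \<in> S"
  shows "Inf S \<le> c"
proof (rule dense_ge)
  fix e assume "c < e"
  moreover have "bdd_below S"
    using assms(1) by (meson bdd_below.I less_imp_le)
  ultimately show "Inf S \<le> e"
    using assms(3) by (simp add: cInf_lower)
qed

lemma dbar_le:
  assumes "premetric d" and "a \<in> A"
  shows "dbar d A x \<le> d a x"
  unfolding dbar_def
proof (rule cInf_pos_le)
  fix e assume "d a x < e"
  then have "x \<in> psetball d A e"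
    using assms(2) by (auto simp: mem_psetball_iff)
  moreover have "e > 0"
    using \<open>d a x < e\<close> assms(1) unfolding premetric_def by (meson le_less_trans)
  ultimately show "e \<in> {e. e > 0 \<and> x \<in> closure (psetball d A e)}"
    using closure_subset by blast
qed (use assms(1) in \<open>auto simp: premetric_def\<close>)

lemma dbar_int_le:
  assumes "premetric d" and "a \<in> A"
  shows "dbar_int d A x \<le> d a x"
  unfolding dbar_int_def
proof (rule cInf_pos_le)
  fix e assume "d a x < e"
  then have "x \<in> psetball d A e"
    using assms(2) by (auto simp: mem_psetball_iff)
  moreover have "e > 0"
    using \<open>d a x < e\<close> assms(1) unfolding premetric_def by (meson le_less_trans)
  ultimately show "e \<in> {e. e > 0 \<and> x \<in> psetball d A e \<union> interior (closure (psetball d A e))}"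
    by blast
qed (use assms(1) in \<open>auto simp: premetric_def\<close>)

lemma dbar_less_imp_mem_closure:
  assumes "A \<noteq> {}" and "dbar d A x < e"
  shows "x \<in> closure (psetball d A e)"
proof -
  let ?S = "{e. e > 0 \<and> x \<in> closure (psetball d A e)}"
  obtain a where "a \<in> A" using assms(1) by blast
  then have "x \<in> psetball d A (\<bar>d a x\<bar> + 1)"
    unfolding mem_psetball_iff by force
  then have "\<bar>d a x\<bar> + 1 \<in> ?S"
    using closure_subset by auto
  then obtain e' where "e' \<in> ?S" "e' < e"
    using cInf_lessD[of ?S e] assms(2) unfolding dbar_def by blast
  then show ?thesis
    using closure_mono[OF psetball_mono[of e' e]] by auto
qed

lemma dbar_int_less_imp_mem:
  assumes "A \<noteq> {}" and "dbar_int d A x < e"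
  shows "x \<in> psetball d A e \<union> interior (closure (psetball d A e))"
proof -
  let ?S = "{e. e > 0 \<and> x \<in> psetball d A e \<union> interior (closure (psetball d A e))}"
  obtain a where "a \<in> A" using assms(1) by blast
  then have "x \<in> psetball d A (\<bar>d a x\<bar> + 1)"
    unfolding mem_psetball_iff by force
  then have "\<bar>d a x\<bar> + 1 \<in> ?S"
    by auto
  then obtain e' where "e' \<in> ?S" "e' < e"
    using cInf_lessD[of ?S e] assms(2) unfolding dbar_int_def by blast
  moreover have "psetball d A e' \<subseteq> psetball d A e"
    using \<open>e' < e\<close> by (simp add: psetball_mono)
  ultimately show ?thesis
    using interior_mono[OF closure_mono] by blast
qed

lemma psetball_subset_regularization:
  assumes "premetric d"
  shows "psetball d A e \<subseteq> psetball (regularization d) A e"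
proof -
  have "regularization d a x \<le> d a x" for a x
    unfolding regularization_def using dbar_le[OF assms] by blast
  then show ?thesis
    unfolding mem_psetball_iff subset_iff by (meson le_less_trans)
qed

lemma psetball_subset_semiregularization:
  assumes "premetric d"
  shows "psetball d A e \<subseteq> psetball (semiregularization d) A e"
proof -
  have "semiregularization d a x \<le> d a x" for a x
    unfolding semiregularization_def using dbar_int_le[OF assms] by blast
  then show ?thesis
    unfolding mem_psetball_iff subset_iff by (meson le_less_trans)
qed

lemma psetball_regularization_subset_closure:
  "psetball (regularization d) A e \<subseteq> closure (psetball d A e)"
proof
  fix x assume "x \<in> psetball (regularization d) A e"
  then obtain a where "a \<in> A" "dbar d {a} x < e"
    by (auto simp: mem_psetball_iff regularization_def)
  then show "x \<in> closure (psetball d A e)"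
    using dbar_less_imp_mem_closure[of "{a}"] closure_mono[OF psetball_singleton_subset] by blast
qed

lemma psetball_semiregularization_subset:
  "psetball (semiregularization d) A e \<subseteq> psetball d A e \<union> interior (closure (psetball d A e))"
proof
  fix x assume "x \<in> psetball (semiregularization d) A e"
  then obtain a where "a \<in> A" "dbar_int d {a} x < e"
    by (auto simp: mem_psetball_iff semiregularization_def)
  moreover note psetball_singleton_subset[OF \<open>a \<in> A\<close>, of d e]
  ultimately show "x \<in> psetball d A e \<union> interior (closure (psetball d A e))"
    using dbar_int_less_imp_mem[of "{a}"] interior_mono[OF closure_mono] by blast
qed

lemma closure_psetball_regularization:
  assumes "premetric d"
  shows "closure (psetball (regularization d) A e) = closure (psetball d A e)"
  by (metis assms closure_minimal closure_mono closed_closure subset_antisym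
      psetball_regularization_subset_closure psetball_subset_regularization)

lemma closure_psetball_semiregularization:
  assumes "premetric d"
  shows "closure (psetball (semiregularization d) A e) = closure (psetball d A e)"
proof (rule subset_antisym)
  have "psetball (semiregularization d) A e \<subseteq> closure (psetball d A e)"
    using psetball_semiregularization_subset closure_subset interior_subset by blast
  then show "closure (psetball (semiregularization d) A e) \<subseteq> closure (psetball d A e)"
    by (simp add: closure_minimal)
  show "closure (psetball d A e) \<subseteq> closure (psetball (semiregularization d) A e)"
    by (simp add: assms closure_mono psetball_subset_semiregularization)
qed

lemma semiregular_psetball_semiregularization:
  assumes "premetric d"
  shows "psetball (semiregularization d) A e \<union> interior (closure (psetball (semiregularization d) A e))
       = psetball d A e \<union> interior (closure (psetball d A e))"
  unfolding closure_psetball_semiregularization[OF assms]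
  using psetball_semiregularization_subset psetball_subset_semiregularization[OF assms] by blast

theorem proposition1p5:
  fixes d :: "'a::topological_space \<Rightarrow> 'a \<Rightarrow> real" and A :: "'a set"
  assumes "premetric d" and "A \<noteq> {}"
  shows "dbar (regularization d) A = dbar d A
       \<and> dbar_int (semiregularization d) A = dbar_int d A"
  unfolding dbar_def dbar_int_def
  by (simp add: closure_psetball_regularization semiregular_psetball_semiregularization assms(1))

end
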